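(* Let $K$ be a field of characteristic $p>0$, $s\geq1$ an integer, $n=1+p^s$, let $X$ be the $n\times n$ matrix with $1$'s in positions $(i,i+1)$, $1\leq i\leq n-1$, and $0$ elsewhere, let $B=1+X$, and let $k$ be a positive integer. Then: (1) there exists a unique matrix $A\in\mathrm{U}_n(K)$ whose last column has only zero entries except at position $(n,n)$ such that $ABA^{-1}=B^{1+p^k}$; (2) if $p=2$, there exists a unique matrix $A\in\mathrm{U}_n(K)$ whose last column has only zero entries except at position $(n,n)$ such that $ABA^{-1}=B^{-(1+2^k)}$.
   Context: $\mathrm{U}_n(K)$ is the group of upper-triangular unipotent $n\times n$ matrices over $K$. *)

theory Defs
  imports "Jordan_Normal_Form.Matrix"
begin

definition unitri_upper :: "nat \<Rightarrow> 'a :: field mat \<Rightarrow> bool" where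
  "unitri_upper n A \<longleftrightarrow> A \<in> carrier_mat n n \<and> (\<forall>i<n. A $$ (i,i) = 1)
      \<and> (\<forall>i<n. \<forall>j<i. A $$ (i,j) = 0)"

definition mat_inv :: "'a :: field mat \<Rightarrow> 'a mat" where
  "mat_inv A = (THE C. C \<in> carrier_mat (dim_row A) (dim_row A) \<and> inverts_mat A C \<and> inverts_mat C A)"

definition shiftX :: "nat \<Rightarrow> 'a :: field mat" where
  "shiftX n = mat n n (\<lambda>(i,j). if j = Suc i then 1 else 0)"

(* last column zero except at (n,n) -- 0-based: column n-1, rows < n-1 *)
definition last_col_trivial :: "nat \<Rightarrow> 'a :: field mat \<Rightarrow> bool" where
  "last_col_trivial n A \<longleftrightarrow> (\<forall>i < n - 1. A $$ (i, n - 1) = 0)"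

end

theory Submission
  imports Defs "Jordan_Normal_Form.Determinant"
begin

text \<open>Both targets have the form M = 1 + Y with M upper unitriangular and
  every superdiagonal entry equal to 1: the superdiagonal of B^m is m, and 1 + p^k = 1 in K,
  while for p = 2 also -(1 + 2^k) = 1. For invertible A the equation A B A^-1 = M means
  A X = Y A, i.e. column c - 1 of A is Y times column c. Fixing the last column to be e_n
  therefore forces column c to be Y^(n-1-c) e_n, and this matrix is unitriangular because
  Y^j e_n vanishes below row n - 1 - j and has a 1 there.\<close>

lemma index_mult_mat_sum:
  assumes "A \<in> carrier_mat n m" "B \<in> carrier_mat m l" "i < n" "j < l"
  shows "(A * B) $$ (i,j) = (\<Sum>r<m. A $$ (i,r) * B $$ (r,j))"
  using assms by (simp add: scalar_prod_def atLeast0LessThan)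

lemma sum_lessThan_eq_single:
  fixes f :: "nat \<Rightarrow> 'a::comm_monoid_add"
  assumes "i < n" "\<And>r. r < n \<Longrightarrow> r \<noteq> i \<Longrightarrow> f r = 0"
  shows "(\<Sum>r<n. f r) = f i"
proof -
  have "(\<Sum>r<n. f r) = f i + (\<Sum>r\<in>{..<n} - {i}. f r)"
    using assms(1) by (simp add: sum.remove)
  also have "(\<Sum>r\<in>{..<n} - {i}. f r) = 0"
    using assms(2) by (intro sum.neutral) auto
  finally show ?thesis by simp
qed

lemma sum_lessThan_eq_pair:
  fixes f :: "nat \<Rightarrow> 'a::comm_monoid_add"
  assumes "i < n" "j < n" "i \<noteq> j" "\<And>r. r < n \<Longrightarrow> r \<noteq> i \<Longrightarrow> r \<noteq> j \<Longrightarrow> f r = 0"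
  shows "(\<Sum>r<n. f r) = f i + f j"
proof -
  have "(\<Sum>r<n. f r) = f i + (\<Sum>r\<in>{..<n} - {i}. f r)"
    using assms(1) by (simp add: sum.remove)
  also have "(\<Sum>r\<in>{..<n} - {i}. f r) = f j + (\<Sum>r\<in>{..<n} - {i} - {j}. f r)"
    using assms by (subst sum.remove[of _ j]) auto
  also have "(\<Sum>r\<in>{..<n} - {i} - {j}. f r) = 0"
    using assms(4) by (intro sum.neutral) auto
  finally show ?thesis by simp
qed

lemma pow_mat_Suc_left:
  assumes "Y \<in> carrier_mat n n"
  shows "Y * Y ^\<^sub>m m = Y ^\<^sub>m Suc m"
proof (induction m)
  case (Suc m)
  have "Y * Y ^\<^sub>m Suc m = (Y * Y ^\<^sub>m m) * Y"
    using assms by (simp del: assoc_mult_mat add: assoc_mult_mat[of Y n n "Y ^\<^sub>m m" n Y n, symmetric])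
  then show ?case using Suc by simp
qed (use assms in simp)

lemma pow_mat_left_inverse:
  assumes A: "A \<in> carrier_mat n n" and C: "C \<in> carrier_mat n n" and CA: "C * A = 1\<^sub>m n"
  shows "C ^\<^sub>m m * A ^\<^sub>m m = 1\<^sub>m n"
proof (induction m)
  case (Suc m)
  have Cm: "C ^\<^sub>m m \<in> carrier_mat n n" and Am: "A ^\<^sub>m m \<in> carrier_mat n n" using A C by auto
  have "C ^\<^sub>m Suc m * A ^\<^sub>m Suc m = (C ^\<^sub>m m * C) * (A * A ^\<^sub>m m)"
    using pow_mat_Suc_left[OF A, of m] by simp
  also have "\<dots> = C ^\<^sub>m m * (C * (A * A ^\<^sub>m m))"
    using mult_carrier_mat[OF A Am] by (rule assoc_mult_mat[OF Cm C])
  also have "\<dots> = C ^\<^sub>m m * ((C * A) * A ^\<^sub>m m)"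
    using assoc_mult_mat[OF C A Am] by simp
  also have "\<dots> = 1\<^sub>m n" using CA Suc Am by (simp add: left_mult_one_mat[OF Am])
  finally show ?case .
qed (use A C in simp)

lemma mat_inv_eqI:
  assumes A: "A \<in> carrier_mat n n" and C: "C \<in> carrier_mat n n"
    and AC: "A * C = 1\<^sub>m n" and CA: "C * A = 1\<^sub>m n"
  shows "mat_inv A = C"
  unfolding mat_inv_def inverts_mat_def
proof (rule the_equality)
  fix D assume "D \<in> carrier_mat (dim_row A) (dim_row A) \<and> A * D = 1\<^sub>m (dim_row A) \<and> D * A = 1\<^sub>m (dim_row D)"
  then have D: "D \<in> carrier_mat n n" and DA: "D * A = 1\<^sub>m n" using A by auto
  have "D = (D * A) * C" using D A C AC by simp
  then show "D = C" using DA C by simp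
qed (use assms in auto)

lemma mat_inv_pow_mat:
  assumes A: "A \<in> carrier_mat n n" and C: "C \<in> carrier_mat n n" and CA: "C * A = 1\<^sub>m n"
  shows "mat_inv (A ^\<^sub>m m) = C ^\<^sub>m m"
proof -
  have left: "C ^\<^sub>m m * A ^\<^sub>m m = 1\<^sub>m n" by (rule pow_mat_left_inverse[OF A C CA])
  then have "A ^\<^sub>m m * C ^\<^sub>m m = 1\<^sub>m n"
    using mat_mult_left_right_inverse[OF pow_carrier_mat[OF C] pow_carrier_mat[OF A]] by blast
  then show ?thesis using left A C by (intro mat_inv_eqI[of _ n]) auto
qed

lemma conj_eq_iff_mult_eq:
  assumes A: "A \<in> carrier_mat n n" and Ai: "Ai \<in> carrier_mat n n"
    and AAi: "A * Ai = 1\<^sub>m n" and AiA: "Ai * A = 1\<^sub>m n"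
    and B: "B \<in> carrier_mat n n" and M: "M \<in> carrier_mat n n"
  shows "A * B * mat_inv A = M \<longleftrightarrow> A * B = M * A"
proof -
  have inv: "mat_inv A = Ai" by (rule mat_inv_eqI[OF A Ai AAi AiA])
  have AB: "A * B \<in> carrier_mat n n" using A B by simp
  show ?thesis
  proof
    assume "A * B * mat_inv A = M"
    moreover have "A * B = (A * B * Ai) * A"
      using AB Ai A AiA by (simp add: right_mult_one_mat[OF AB])
    ultimately show "A * B = M * A" using inv by simp
  next
    assume "A * B = M * A"
    then have "A * B * Ai = M * (A * Ai)" using M A Ai by simp
    then show "A * B * mat_inv A = M" using AAi M inv by simp
  qed
qed

lemma unitri_upper_invertible:
  assumes A: "unitri_upper n A"
  obtains Ai where "Ai \<in> carrier_mat n n" "A * Ai = 1\<^sub>m n" "Ai * A = 1\<^sub>m n"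
proof -
  have cA: "A \<in> carrier_mat n n" using A by (simp add: unitri_upper_def)
  have "upper_triangular A" using A cA unfolding upper_triangular_def unitri_upper_def by auto
  then have "det A = (\<Prod>i = 0..<n. A $$ (i,i))"
    using cA by (simp add: det_upper_triangular prod_list_diag_prod)
  also have "\<dots> = 1" using A by (simp add: unitri_upper_def)
  finally have "A \<in> Units (ring_mat TYPE('a) n undefined)"
    using det_non_zero_imp_unit[OF cA] by simp
  then show ?thesis using that unfolding Units_def by (auto simp: ring_mat_simps)
qed

definition unitri_superdiag :: "nat \<Rightarrow> 'a::field \<Rightarrow> 'a mat \<Rightarrow> bool" where
  "unitri_superdiag n d M \<longleftrightarrow> unitri_upper n M \<and> (\<forall>i. Suc i < n \<longrightarrow> M $$ (i, Suc i) = d)"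

lemma unitri_superdiag_mult:
  assumes M: "unitri_superdiag n d M" and N: "unitri_superdiag n e N"
  shows "unitri_superdiag n (d + e) (M * N)"
proof -
  have cM: "M \<in> carrier_mat n n" and cN: "N \<in> carrier_mat n n"
    using M N by (auto simp: unitri_superdiag_def unitri_upper_def)
  note MN = M[unfolded unitri_superdiag_def unitri_upper_def] N[unfolded unitri_superdiag_def unitri_upper_def]
  have entry: "(M * N) $$ (i,j) = (\<Sum>r<n. M $$ (i,r) * N $$ (r,j))" if "i < n" "j < n" for i j
    using cM cN that by (rule index_mult_mat_sum)
  have below: "(M * N) $$ (i,j) = 0" if "i < n" "j < i" for i j
  proof -
    have "M $$ (i,r) * N $$ (r,j) = 0" if "r < n" for r
      using MN \<open>i < n\<close> \<open>j < i\<close> that by (cases "r < i") auto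
    then show ?thesis using entry that by (simp add: sum.neutral)
  qed
  have diag: "(M * N) $$ (i,i) = 1" if "i < n" for i
  proof -
    have "(\<Sum>r<n. M $$ (i,r) * N $$ (r,i)) = M $$ (i,i) * N $$ (i,i)"
      using MN that by (intro sum_lessThan_eq_single) (auto simp: neq_iff)
    then show ?thesis using entry that MN by simp
  qed
  have superdiag: "(M * N) $$ (i, Suc i) = d + e" if "Suc i < n" for i
  proof -
    have "(\<Sum>r<n. M $$ (i,r) * N $$ (r, Suc i))
        = M $$ (i,i) * N $$ (i, Suc i) + M $$ (i, Suc i) * N $$ (Suc i, Suc i)"
      using MN that by (intro sum_lessThan_eq_pair) (auto simp: neq_iff Suc_lessI)
    then show ?thesis using entry that MN by simp
  qed
  show ?thesis unfolding unitri_superdiag_def unitri_upper_def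
    using cM cN below diag superdiag by auto
qed

lemma unitri_superdiag_pow:
  assumes "unitri_superdiag n d M"
  shows "unitri_superdiag n (of_nat m * d) (M ^\<^sub>m m)"
proof (induction m)
  case 0
  have "dim_row M = n" using assms by (auto simp: unitri_superdiag_def unitri_upper_def)
  then show ?case by (simp add: unitri_superdiag_def unitri_upper_def)
next
  case (Suc m)
  show ?case using unitri_superdiag_mult[OF Suc assms] by (simp add: algebra_simps)
qed

definition strict_upper_unit_superdiag :: "nat \<Rightarrow> 'a::field mat \<Rightarrow> bool" where
  "strict_upper_unit_superdiag n Y \<longleftrightarrow> Y \<in> carrier_mat n n \<and> (\<forall>i<n. \<forall>j\<le>i. Y $$ (i,j) = 0)
     \<and> (\<forall>i. Suc i < n \<longrightarrow> Y $$ (i, Suc i) = 1)"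

lemma strict_upper_unit_superdiag_minus_one:
  assumes M: "unitri_superdiag n 1 M"
  shows "strict_upper_unit_superdiag n (M - 1\<^sub>m n)"
proof -
  have "M \<in> carrier_mat n n" using M by (simp add: unitri_superdiag_def unitri_upper_def)
  then show ?thesis using M unfolding strict_upper_unit_superdiag_def unitri_superdiag_def unitri_upper_def
    by (auto simp: le_less)
qed

lemma strict_upper_unit_superdiag_pow:
  assumes Y: "strict_upper_unit_superdiag n Y" and "i < n" "l < n"
  shows "l < i + j \<Longrightarrow> (Y ^\<^sub>m j) $$ (i,l) = 0"
    and "l = i + j \<Longrightarrow> (Y ^\<^sub>m j) $$ (i,l) = 1"
proof -
  have cY: "Y \<in> carrier_mat n n" using Y by (simp add: strict_upper_unit_superdiag_def)
  have "\<forall>i<n. \<forall>l<n. (l < i + j \<longrightarrow> (Y ^\<^sub>m j) $$ (i,l) = 0) \<and> (l = i + j \<longrightarrow> (Y ^\<^sub>m j) $$ (i,l) = 1)"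
  proof (induction j)
    case 0
    then show ?case using cY by auto
  next
    case (Suc j)
    show ?case
    proof (intro allI impI conjI)
      fix i l assume i: "i < n" and l: "l < n"
      have entry: "(Y ^\<^sub>m Suc j) $$ (i,l) = (\<Sum>r<n. (Y ^\<^sub>m j) $$ (i,r) * Y $$ (r,l))"
        using cY i l by (simp only: pow_mat.simps(2)) (rule index_mult_mat_sum, auto)
      have vanish: "(Y ^\<^sub>m j) $$ (i,r) * Y $$ (r,l) = 0" if "r < n" "r \<noteq> i + j" "l \<le> Suc (i + j)" for r
        using Suc.IH Y i l that unfolding strict_upper_unit_superdiag_def
        by (cases "r < i + j") auto
      show "(Y ^\<^sub>m Suc j) $$ (i,l) = 0" if "l < i + Suc j"
      proof -
        have "(Y ^\<^sub>m j) $$ (i,i + j) * Y $$ (i + j,l) = 0" if "i + j < n"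
          using Y that \<open>l < i + Suc j\<close> l by (simp add: strict_upper_unit_superdiag_def)
        then have "(Y ^\<^sub>m j) $$ (i,r) * Y $$ (r,l) = 0" if "r < n" for r
          using vanish[OF that] \<open>l < i + Suc j\<close> that by (cases "r = i + j") auto
        then show ?thesis using entry by (simp add: sum.neutral)
      qed
      show "(Y ^\<^sub>m Suc j) $$ (i,l) = 1" if "l = i + Suc j"
      proof -
        have "(Y ^\<^sub>m Suc j) $$ (i,l) = (Y ^\<^sub>m j) $$ (i,i + j) * Y $$ (i + j,l)"
          using entry vanish that l by (simp add: sum_lessThan_eq_single[of "i + j"])
        then show ?thesis using Suc.IH Y i l that by (simp add: strict_upper_unit_superdiag_def)
      qed
    qed
  qed
  then show "l < i + j \<Longrightarrow> (Y ^\<^sub>m j) $$ (i,l) = 0" and "l = i + j \<Longrightarrow> (Y ^\<^sub>m j) $$ (i,l) = 1"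
    using assms(2,3) by auto
qed

lemma index_mult_shiftX:
  assumes "A \<in> carrier_mat m n" "i < m" "c < n"
  shows "(A * shiftX n) $$ (i,c) = (if c = 0 then 0 else A $$ (i, c - 1))"
proof -
  have entry: "(A * shiftX n) $$ (i,c) = (\<Sum>r<n. A $$ (i,r) * shiftX n $$ (r,c))"
    using assms by (intro index_mult_mat_sum) (auto simp: shiftX_def)
  show ?thesis
  proof (cases c)
    case (Suc c')
    have "(\<Sum>r<n. A $$ (i,r) * shiftX n $$ (r,c)) = A $$ (i,c') * shiftX n $$ (c',c)"
      using Suc assms(3) by (intro sum_lessThan_eq_single) (auto simp: shiftX_def)
    then show ?thesis using entry Suc assms(3) by (simp add: shiftX_def)
  qed (use entry assms(3) in \<open>simp add: shiftX_def\<close>)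
qed

text \<open>Column c is Y^(n-1-c) e_n; indices are 0-based, so e_n is column n - 1 of the identity.\<close>

definition cyclic_mat :: "nat \<Rightarrow> 'a::field mat \<Rightarrow> 'a mat" where
  "cyclic_mat n Y = mat n n (\<lambda>(i,c). (Y ^\<^sub>m (n - 1 - c)) $$ (i, n - 1))"

lemma cyclic_mat_unitri_upper:
  assumes Y: "strict_upper_unit_superdiag n Y"
  shows "unitri_upper n (cyclic_mat n Y)"
  unfolding unitri_upper_def
proof (intro conjI allI impI)
  fix i assume "i < n"
  then show "cyclic_mat n Y $$ (i,i) = 1"
    using strict_upper_unit_superdiag_pow(2)[OF Y, of i "n - 1" "n - 1 - i"] by (simp add: cyclic_mat_def)
next
  fix i j assume "i < n" "j < i"
  then show "cyclic_mat n Y $$ (i,j) = 0"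
    using strict_upper_unit_superdiag_pow(1)[OF Y, of i "n - 1" "n - 1 - j"] by (simp add: cyclic_mat_def)
qed (simp add: cyclic_mat_def)

lemma cyclic_mat_last_col_trivial:
  assumes "Y \<in> carrier_mat n n"
  shows "last_col_trivial n (cyclic_mat n Y)"
  using assms by (auto simp: last_col_trivial_def cyclic_mat_def)

lemma cyclic_mat_mult_shiftX:
  assumes Y: "strict_upper_unit_superdiag n Y"
  shows "cyclic_mat n Y * shiftX n = Y * cyclic_mat n Y"
proof (rule eq_matI)
  have cY: "Y \<in> carrier_mat n n" using Y by (simp add: strict_upper_unit_superdiag_def)
  have cA: "cyclic_mat n Y \<in> carrier_mat n n" by (simp add: cyclic_mat_def)
  fix i c assume "i < dim_row (Y * cyclic_mat n Y)" "c < dim_col (Y * cyclic_mat n Y)"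
  then have i: "i < n" and c: "c < n" using cY by (auto simp: cyclic_mat_def)
  have "(Y * cyclic_mat n Y) $$ (i,c) = (\<Sum>r<n. Y $$ (i,r) * (Y ^\<^sub>m (n - 1 - c)) $$ (r, n - 1))"
    using i c by (subst index_mult_mat_sum[OF cY cA i c]) (auto simp: cyclic_mat_def intro!: sum.cong)
  also have "\<dots> = (Y * Y ^\<^sub>m (n - 1 - c)) $$ (i, n - 1)"
    by (rule index_mult_mat_sum[symmetric, OF cY pow_carrier_mat[OF cY] i]) (use i in simp)
  also have "\<dots> = (Y ^\<^sub>m (n - c)) $$ (i, n - 1)"
    using c pow_mat_Suc_left[OF cY, of "n - 1 - c"] by (simp del: pow_mat.simps add: Suc_diff_Suc)
  finally have rhs: "(Y * cyclic_mat n Y) $$ (i,c) = (Y ^\<^sub>m (n - c)) $$ (i, n - 1)" .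
  show "(cyclic_mat n Y * shiftX n) $$ (i,c) = (Y * cyclic_mat n Y) $$ (i,c)"
    using rhs index_mult_shiftX[OF cA i c] strict_upper_unit_superdiag_pow(1)[OF Y i, of "n - 1" n] i c
    by (auto simp: cyclic_mat_def)
qed (use Y in \<open>auto simp: cyclic_mat_def shiftX_def strict_upper_unit_superdiag_def\<close>)

lemma intertwiner_eq_cyclic_mat:
  assumes Y: "Y \<in> carrier_mat n n"
    and A: "unitri_upper n A" "last_col_trivial n A" "A * shiftX n = Y * A"
  shows "A = cyclic_mat n Y"
proof -
  have cA: "A \<in> carrier_mat n n" using A(1) by (simp add: unitri_upper_def)
  have column: "A $$ (i, n - 1 - j) = (Y ^\<^sub>m j) $$ (i, n - 1)" if "j < n" "i < n" for i j
    using that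
  proof (induction j arbitrary: i)
    case 0
    then show ?case using A(1,2) Y
      by (cases "i = n - 1") (auto simp: unitri_upper_def last_col_trivial_def)
  next
    case (Suc j)
    have "A $$ (i, n - 1 - Suc j) = (A * shiftX n) $$ (i, n - 1 - j)"
      using index_mult_shiftX[OF cA Suc.prems(2), of "n - 1 - j"] Suc.prems by simp
    also have "\<dots> = (\<Sum>r<n. Y $$ (i,r) * A $$ (r, n - 1 - j))"
      unfolding A(3) by (rule index_mult_mat_sum[OF Y cA]) (use Suc.prems in auto)
    also have "\<dots> = (\<Sum>r<n. Y $$ (i,r) * (Y ^\<^sub>m j) $$ (r, n - 1))"
      using Suc.IH Suc.prems by simp
    also have "\<dots> = (Y * Y ^\<^sub>m j) $$ (i, n - 1)"
      by (rule index_mult_mat_sum[symmetric, OF Y pow_carrier_mat[OF Y]]) (use Suc.prems in auto)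
    also have "\<dots> = (Y ^\<^sub>m Suc j) $$ (i, n - 1)"
      using pow_mat_Suc_left[OF Y, of j] by simp
    finally show ?case .
  qed
  show ?thesis
  proof (rule eq_matI)
    fix i c assume "i < dim_row (cyclic_mat n Y)" "c < dim_col (cyclic_mat n Y)"
    then show "A $$ (i,c) = cyclic_mat n Y $$ (i,c)"
      using column[of "n - 1 - c" i] by (auto simp: cyclic_mat_def)
  qed (use cA in \<open>auto simp: cyclic_mat_def\<close>)
qed

lemma conj_unipotent_shift_iff:
  assumes A: "unitri_upper n A" and Y: "Y \<in> carrier_mat n n"
  shows "A * (1\<^sub>m n + shiftX n) * mat_inv A = 1\<^sub>m n + Y \<longleftrightarrow> A * shiftX n = Y * A"
proof -
  obtain Ai where Ai: "Ai \<in> carrier_mat n n" "A * Ai = 1\<^sub>m n" "Ai * A = 1\<^sub>m n"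
    using unitri_upper_invertible[OF A] by blast
  have cA: "A \<in> carrier_mat n n" using A by (simp add: unitri_upper_def)
  have cX: "shiftX n \<in> carrier_mat n n" by (simp add: shiftX_def)
  have "A * (1\<^sub>m n + shiftX n) * mat_inv A = 1\<^sub>m n + Y
      \<longleftrightarrow> A * (1\<^sub>m n + shiftX n) = (1\<^sub>m n + Y) * A"
    by (intro conj_eq_iff_mult_eq[OF cA Ai] add_carrier_mat one_carrier_mat cX Y)
  also have "\<dots> \<longleftrightarrow> A + A * shiftX n = A + Y * A"
    using mult_add_distrib_mat[OF cA one_carrier_mat cX] add_mult_distrib_mat[OF one_carrier_mat Y cA] cA
    by simp
  also have "\<dots> \<longleftrightarrow> A * shiftX n = Y * A"
  proof
    assume sum_eq: "A + A * shiftX n = A + Y * A"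
    show "A * shiftX n = Y * A"
    proof (rule eq_matI)
      fix i j assume "i < dim_row (Y * A)" "j < dim_col (Y * A)"
      then show "(A * shiftX n) $$ (i,j) = (Y * A) $$ (i,j)"
        using arg_cong[OF sum_eq, of "\<lambda>P. P $$ (i,j)"]
        by (simp add: carrier_matD[OF cA] carrier_matD[OF cX] carrier_matD[OF Y])
    qed (use cA cX Y in auto)
  qed simp
  finally show ?thesis .
qed

lemma ex1_conj_unipotent_shift:
  assumes M: "unitri_superdiag n 1 M"
  shows "\<exists>!A. unitri_upper n A \<and> last_col_trivial n A \<and> A * (1\<^sub>m n + shiftX n) * mat_inv A = M"
proof -
  define Y where "Y = M - 1\<^sub>m n"
  have Y: "strict_upper_unit_superdiag n Y"
    unfolding Y_def by (rule strict_upper_unit_superdiag_minus_one[OF M])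
  have cY: "Y \<in> carrier_mat n n" using Y by (simp add: strict_upper_unit_superdiag_def)
  have "M \<in> carrier_mat n n" using M by (simp add: unitri_superdiag_def unitri_upper_def)
  then have MY: "M = 1\<^sub>m n + Y" unfolding Y_def by (intro eq_matI) auto
  show ?thesis
  proof (rule ex1I[of _ "cyclic_mat n Y"])
    show "unitri_upper n (cyclic_mat n Y) \<and> last_col_trivial n (cyclic_mat n Y)
        \<and> cyclic_mat n Y * (1\<^sub>m n + shiftX n) * mat_inv (cyclic_mat n Y) = M"
      using cyclic_mat_unitri_upper[OF Y] cyclic_mat_last_col_trivial[OF cY]
        cyclic_mat_mult_shiftX[OF Y] conj_unipotent_shift_iff[OF _ cY] MY by auto
  next
    fix A assume "unitri_upper n A \<and> last_col_trivial n A \<and> A * (1\<^sub>m n + shiftX n) * mat_inv A = M"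
    then show "A = cyclic_mat n Y"
      using intertwiner_eq_cyclic_mat[OF cY] conj_unipotent_shift_iff[OF _ cY] MY by auto
  qed
qed

lemma unitri_superdiag_unipotent_shift: "unitri_superdiag n 1 (1\<^sub>m n + shiftX n)"
  by (auto simp: unitri_superdiag_def unitri_upper_def shiftX_def)

definition unipotent_shift_inv :: "nat \<Rightarrow> 'a::field mat" where
  "unipotent_shift_inv n = mat n n (\<lambda>(i,j). if i \<le> j then (-1) ^ (j - i) else 0)"

lemma unitri_superdiag_unipotent_shift_inv: "unitri_superdiag n (-1) (unipotent_shift_inv n)"
  by (auto simp: unitri_superdiag_def unitri_upper_def unipotent_shift_inv_def)

lemma unipotent_shift_mult_inv:
  "(1\<^sub>m n + shiftX n) * unipotent_shift_inv n = (1\<^sub>m n :: 'a::field mat)"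
proof (rule eq_matI)
  let ?B = "1\<^sub>m n + shiftX n :: 'a mat" and ?C = "unipotent_shift_inv n :: 'a mat"
  fix i j assume "i < dim_row (1\<^sub>m n :: 'a mat)" "j < dim_col (1\<^sub>m n :: 'a mat)"
  then have i: "i < n" and j: "j < n" by auto
  have entry: "(?B * ?C) $$ (i,j) = (\<Sum>r<n. ?B $$ (i,r) * ?C $$ (r,j))"
    using i j by (intro index_mult_mat_sum) (auto simp: shiftX_def unipotent_shift_inv_def)
  show "(?B * ?C) $$ (i,j) = 1\<^sub>m n $$ (i,j)"
  proof (cases "Suc i < n")
    case True
    have "(\<Sum>r<n. ?B $$ (i,r) * ?C $$ (r,j)) = ?C $$ (i,j) + ?C $$ (Suc i, j)"
      using i True by (subst sum_lessThan_eq_pair[of i _ "Suc i"]) (auto simp: shiftX_def)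
    also have "\<dots> = 1\<^sub>m n $$ (i,j)"
    proof (cases "i < j")
      case True
      then have "j - i = Suc (j - Suc i)" by simp
      then show ?thesis using True i j by (simp add: unipotent_shift_inv_def)
    qed (use i j True in \<open>auto simp: unipotent_shift_inv_def\<close>)
    finally show ?thesis using entry by simp
  next
    case False
    have "(\<Sum>r<n. ?B $$ (i,r) * ?C $$ (r,j)) = ?C $$ (i,j)"
      using i False by (subst sum_lessThan_eq_single[of i]) (auto simp: shiftX_def)
    then show ?thesis using entry i j False by (auto simp: unipotent_shift_inv_def)
  qed
qed (auto simp: unipotent_shift_inv_def shiftX_def)

lemma unitri_superdiag_mat_inv_pow:
  "unitri_superdiag n (- of_nat m) (mat_inv ((1\<^sub>m n + shiftX n) ^\<^sub>m m) :: 'a::field mat)"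
proof -
  let ?B = "1\<^sub>m n + shiftX n :: 'a mat" and ?C = "unipotent_shift_inv n :: 'a mat"
  have B: "?B \<in> carrier_mat n n" and C: "?C \<in> carrier_mat n n"
    by (auto simp: shiftX_def unipotent_shift_inv_def)
  have "?C * ?B = 1\<^sub>m n"
    using mat_mult_left_right_inverse[OF B C unipotent_shift_mult_inv] .
  then have "mat_inv (?B ^\<^sub>m m) = ?C ^\<^sub>m m" by (rule mat_inv_pow_mat[OF B C])
  then show ?thesis
    using unitri_superdiag_pow[OF unitri_superdiag_unipotent_shift_inv, of n m] by simp
qed

lemma of_nat_one_plus_CHAR_power:
  assumes "k > 0"
  shows "of_nat (1 + CHAR('a) ^ k) = (1 :: 'a::semiring_1)"
  using assms by (simp add: of_nat_power power_0_left)

theorem lemma3p4: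
  fixes p s k n :: nat and B :: "'a :: field mat"
  assumes "CHAR('a) = p" and "p > 0" and "s \<ge> 1" and "n = 1 + p ^ s"
    and "B = 1\<^sub>m n + shiftX n" and "k > 0"
  shows "(\<exists>!A. unitri_upper n A \<and> last_col_trivial n A
            \<and> A * B * mat_inv A = B ^\<^sub>m (1 + p ^ k))
         \<and> (p = 2 \<longrightarrow> (\<exists>!A. unitri_upper n A \<and> last_col_trivial n A
            \<and> A * B * mat_inv A = mat_inv (B ^\<^sub>m (1 + 2 ^ k))))"
proof (intro conjI impI)
  have char: "of_nat (1 + p ^ k) = (1 :: 'a)"
    using of_nat_one_plus_CHAR_power[OF assms(6), where 'a='a] unfolding assms(1) .
  have "unitri_superdiag n 1 (B ^\<^sub>m (1 + p ^ k))"
    using unitri_superdiag_pow[OF unitri_superdiag_unipotent_shift, of n "1 + p ^ k", where 'a='a]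
    unfolding char assms(5) by simp
  then show "\<exists>!A. unitri_upper n A \<and> last_col_trivial n A \<and> A * B * mat_inv A = B ^\<^sub>m (1 + p ^ k)"
    using ex1_conj_unipotent_shift unfolding assms(5) by blast
  assume p: "p = 2"
  have "(2 :: 'a) = 0" using of_nat_CHAR[where 'a='a] unfolding assms(1) p by simp
  then have minus_one: "(-1 :: 'a) = 1" by (simp add: neg_eq_iff_add_eq_0)
  have "unitri_superdiag n 1 (mat_inv (B ^\<^sub>m (1 + 2 ^ k)))"
    using unitri_superdiag_mat_inv_pow[of n "1 + 2 ^ k", where 'a='a]
    unfolding char[unfolded p] minus_one assms(5) .
  then show "\<exists>!A. unitri_upper n A \<and> last_col_trivial n A
      \<and> A * B * mat_inv A = mat_inv (B ^\<^sub>m (1 + 2 ^ k))"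
    using ex1_conj_unipotent_shift unfolding assms(5) by blast
qed

end
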